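(* Let $S$ be a $\Gamma$-AG$^{**}$-groupoid. If $S\Gamma a=S$ holds for all $a\in S$, or if $a\Gamma S=S$ holds for all $a\in S$, then $S$ is intra-regular.
   Context: Let $S$ and $\Gamma$ be nonempty sets with a map $S\times\Gamma\times S\to S$, $(x,\gamma,y)\mapsto x\gamma y$. $S$ is a $\Gamma$-AG-groupoid if $(x\gamma y)\delta z=(z\gamma y)\delta x$ for all $x,y,z\in S$, $\gamma,\delta\in\Gamma$; it is a $\Gamma$-AG$^{**}$-groupoid if moreover $a\alpha(b\beta c)=b\alpha(a\beta c)$ for all $a,b,c\in S$, $\alpha,\beta\in\Gamma$. For subsets $A,B\subseteq S$, $A\Gamma B=\{a\gamma b: a\in A,\gamma\in\Gamma,b\in B\}$, and $S\Gamma a=S\Gamma\{a\}$, $a\Gamma S=\{a\}\Gamma S$. $S$ is intra-regular if for every $a\in S$ there exist $x,y\in S$ and $\beta,\gamma,\delta\in\Gamma$ with $a=(x\beta(a\delta a))\gamma y$. *)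

theory Defs
  imports Main
begin

text \<open>A Gamma-groupoid: carrier type 's (S), type 'g (Gamma), ternary operation
  op x gamma y = x gamma y.  Types are nonempty, matching nonempty S and Gamma.\<close>

definition gamma_AG_groupoid :: "('s \<Rightarrow> 'g \<Rightarrow> 's \<Rightarrow> 's) \<Rightarrow> bool" where
  "gamma_AG_groupoid op \<longleftrightarrow>
     (\<forall>x y z \<gamma> \<delta>. op (op x \<gamma> y) \<delta> z = op (op z \<gamma> y) \<delta> x)"

definition gamma_AG2_groupoid :: "('s \<Rightarrow> 'g \<Rightarrow> 's \<Rightarrow> 's) \<Rightarrow> bool" where
  "gamma_AG2_groupoid op \<longleftrightarrow> gamma_AG_groupoid op \<and>
     (\<forall>a b c \<alpha> \<beta>. op a \<alpha> (op b \<beta> c) = op b \<alpha> (op a \<beta> c))"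

definition gset_prod :: "('s \<Rightarrow> 'g \<Rightarrow> 's \<Rightarrow> 's) \<Rightarrow> 's set \<Rightarrow> 's set \<Rightarrow> 's set" where
  "gset_prod op A B = {op a \<gamma> b | a \<gamma> b. a \<in> A \<and> b \<in> B}"

definition intra_regular :: "('s \<Rightarrow> 'g \<Rightarrow> 's \<Rightarrow> 's) \<Rightarrow> bool" where
  "intra_regular op \<longleftrightarrow>
     (\<forall>a. \<exists>x y \<beta> \<gamma> \<delta>. a = op (op x \<beta> (op a \<delta> a)) \<gamma> y)"

end

theory Submission
  imports Defs
begin

(* Fix any d.
   If S Gamma a = S for all a, then a lies in S Gamma (a d a), i.e. a = x b (a d a);
   the medial-type identity of a Gamma-AG**-groupoid rewrites this to a = a b (x d a),
   and substituting the first equation for the leading a gives intra-regularity.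
   If a Gamma S = S for all a, then a = (a d a) b y; the left invertive law turns
   a d a = ((a d a) b y) d a into (a b y) d (a d a), and substituting this into
   a = (a d a) b y gives intra-regularity (only the AG-law is needed here). *)

definition intra_regular_elem :: "('s \<Rightarrow> 'g \<Rightarrow> 's \<Rightarrow> 's) \<Rightarrow> 's \<Rightarrow> bool" where
  "intra_regular_elem op a \<longleftrightarrow> (\<exists>x y \<beta> \<gamma> \<delta>. a = op (op x \<beta> (op a \<delta> a)) \<gamma> y)"

lemma intra_regular_iff_elems: "intra_regular op \<longleftrightarrow> (\<forall>a. intra_regular_elem op a)"
  unfolding intra_regular_def intra_regular_elem_def ..

lemma mem_gset_prod_left_singleton: "a \<in> gset_prod op UNIV {b} \<longleftrightarrow> (\<exists>x \<gamma>. a = op x \<gamma> b)"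
  unfolding gset_prod_def by auto

lemma mem_gset_prod_right_singleton: "a \<in> gset_prod op {b} UNIV \<longleftrightarrow> (\<exists>\<gamma> y. a = op b \<gamma> y)"
  unfolding gset_prod_def by auto

lemma left_invertive:
  assumes "gamma_AG_groupoid op"
  shows "op (op x \<gamma> y) \<delta> z = op (op z \<gamma> y) \<delta> x"
  using assms unfolding gamma_AG_groupoid_def by blast

lemma AG2_swap:
  assumes "gamma_AG2_groupoid op"
  shows "op a \<alpha> (op b \<beta> c) = op b \<alpha> (op a \<beta> c)"
  using assms unfolding gamma_AG2_groupoid_def by blast

lemma intra_regular_elem_if_left_multiple:
  assumes AG2: "gamma_AG2_groupoid op" and a: "a = op x \<beta> (op a \<delta> a)"
  shows "intra_regular_elem op a"
proof -
  have "a = op a \<beta> (op x \<delta> a)"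
    using a AG2_swap[OF AG2] by metis
  also have "\<dots> = op (op x \<beta> (op a \<delta> a)) \<beta> (op x \<delta> a)"
    using a by simp
  finally show ?thesis
    unfolding intra_regular_elem_def by blast
qed

lemma intra_regular_elem_if_right_multiple:
  assumes AG: "gamma_AG_groupoid op" and a: "a = op (op a \<delta> a) \<beta> y"
  shows "intra_regular_elem op a"
proof -
  have "op a \<delta> a = op (op (op a \<delta> a) \<beta> y) \<delta> a"
    using a by (rule arg_cong)
  also have "\<dots> = op (op a \<beta> y) \<delta> (op a \<delta> a)"
    by (rule left_invertive[OF AG])
  finally have "a = op (op (op a \<beta> y) \<delta> (op a \<delta> a)) \<beta> y"
    using a by simp
  then show ?thesis
    unfolding intra_regular_elem_def by blast
qed

theorem mainTheorem1:
  fixes op :: "'s \<Rightarrow> 'g \<Rightarrow> 's \<Rightarrow> 's"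
  assumes "gamma_AG2_groupoid op"
    and "(\<forall>a. gset_prod op UNIV {a} = UNIV) \<or> (\<forall>a. gset_prod op {a} UNIV = UNIV)"
  shows "intra_regular op"
  unfolding intra_regular_iff_elems
proof
  fix a :: 's and \<delta> :: 'g
  have AG: "gamma_AG_groupoid op"
    using assms(1) unfolding gamma_AG2_groupoid_def by blast
  from assms(2) show "intra_regular_elem op a"
  proof
    assume "\<forall>b. gset_prod op UNIV {b} = UNIV"
    then have "a \<in> gset_prod op UNIV {op a \<delta> a}" by blast
    then obtain x \<beta> where "a = op x \<beta> (op a \<delta> a)"
      unfolding mem_gset_prod_left_singleton by blast
    then show ?thesis by (rule intra_regular_elem_if_left_multiple[OF assms(1)])
  next
    assume "\<forall>b. gset_prod op {b} UNIV = UNIV"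
    then have "a \<in> gset_prod op {op a \<delta> a} UNIV" by blast
    then obtain \<beta> y where "a = op (op a \<delta> a) \<beta> y"
      unfolding mem_gset_prod_right_singleton by blast
    then show ?thesis by (rule intra_regular_elem_if_right_multiple[OF AG])
  qed
qed

end
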